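(* Let $P=(A_1,\dots,A_n)$ be a cyclic $n$-gon (distinct vertices on a circle) with vertices ordered anticlockwise, and take all indices modulo $n$ in $\{1,\dots,n\}$. Let $m$ be an integer with $2\le m\le n-1$, and let $q,r\in\{1,\dots,n\}$ be such that $q,q+1,\dots,q+m-2,r,r+1$ are pairwise distinct. Write $I=\{q,q+1,\dots,q+m-2\}$. Then \[ S_{q,r,r+1}\prod_{k=q+1}^{q+m-2} x_{k,r+1} = \sum_{t=0}^{m-3} S_{q+t,\,q+t+1,\,r+1}\; x_{r,r+1}\!\!\prod_{k\in I\setminus\{q+t,q+t+1\}}\!\! x_{k,r+1} \;+\; S_{q+m-2,\,r,\,r+1}\prod_{k=q}^{q+m-3} x_{k,r+1}. \]
   Context: For points $A_p=(x_p,y_p)$, $x_{pq}:=(x_q-x_p)^2+(y_q-y_p)^2$ is the squared distance between $A_p$ and $A_q$, and $S_{pqr}:=2[(x_q-x_p)(y_r-y_p)-(y_q-y_p)(x_r-x_p)]$ is four times the signed area of triangle $A_pA_qA_r$; these are the entries of the polygonal Heronian frieze of $P$. Empty sums equal $0$ and empty products equal $1$. *)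

theory Defs
  imports Complex_Main
begin

text \<open>Squared distance between points p and q (entry x_pq of the Heronian frieze).\<close>
definition sqd :: "real \<times> real \<Rightarrow> real \<times> real \<Rightarrow> real" where
  "sqd p q = (fst q - fst p)^2 + (snd q - snd p)^2"

text \<open>Four times the signed area of triangle p q r (entry S_pqr).\<close>
definition S4 :: "real \<times> real \<Rightarrow> real \<times> real \<Rightarrow> real \<times> real \<Rightarrow> real" where
  "S4 p q r = 2 * ((fst q - fst p) * (snd r - snd p) - (snd q - snd p) * (fst r - fst p))"

definition idx :: "nat \<Rightarrow> nat \<Rightarrow> nat" where
  "idx n k = ((k + n - 1) mod n) + 1"

definition cyclic_ccw :: "nat \<Rightarrow> (nat \<Rightarrow> real \<times> real) \<Rightarrow> bool" where
  "cyclic_ccw n A \<longleftrightarrow> inj_on A {1..n} \<and>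
     (\<exists>c \<rho> \<theta>. \<rho> > 0 \<and>
        (\<forall>i\<in>{1..n}. A i = (fst c + \<rho> * cos (\<theta> i), snd c + \<rho> * sin (\<theta> i))) \<and>
        (\<forall>i. 1 \<le> i \<and> i < n \<longrightarrow> \<theta> i < \<theta> (Suc i)) \<and>
        \<theta> n < \<theta> 1 + 2 * pi)"

end

theory Submission
  imports Defs
begin

(* Inversion centred at Z = A_{r+1} maps the circumcircle to a line, and S_{PQZ}/(x_{PZ} x_{QZ})
   is a fixed multiple of the signed distance between the images of P and Q on that line.
   These ratios are therefore additive along any chain of points of the circle; algebraically
   this is the four-point relation S4_sqd_concyclic. Telescoping along the chain
   A_q, A_{q+1}, ..., A_{q+m-2}, A_r and clearing denominators gives the identity. *)

lemma sqd_eq_0_iff: "sqd P Q = 0 \<longleftrightarrow> P = Q"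
  by (cases P; cases Q) (auto simp: sqd_def sum_power2_eq_zero_iff)

lemma S4_sqd_concyclic:
  assumes "sqd c P = s" "sqd c Q = s" "sqd c R = s" "sqd c Z = s"
  shows "S4 P Q Z * sqd R Z + S4 Q R Z * sqd P Z = S4 P R Z * sqd Q Z"
proof -
  have "S4 P Q Z * sqd R Z + S4 Q R Z * sqd P Z - S4 P R Z * sqd Q Z =
      S4 P Q Z * (sqd c R - sqd c Z) + S4 Q R Z * (sqd c P - sqd c Z)
    - S4 P R Z * (sqd c Q - sqd c Z)"
    by (cases P; cases Q; cases R; cases Z; cases c)
       (simp add: sqd_def S4_def algebra_simps power2_eq_square)
  with assms show ?thesis by simp
qed

definition inversion_chord :: "real \<times> real \<Rightarrow> real \<times> real \<Rightarrow> real \<times> real \<Rightarrow> real" where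
  "inversion_chord Z P Q = S4 P Q Z / (sqd P Z * sqd Q Z)"

lemma inversion_chord_diff:
  assumes "sqd c P = s" "sqd c Q = s" "sqd c R = s" "sqd c Z = s"
    and "P \<noteq> Z" "Q \<noteq> Z" "R \<noteq> Z"
  shows "inversion_chord Z P Q = inversion_chord Z P R - inversion_chord Z Q R"
proof -
  have "sqd P Z \<noteq> 0" "sqd Q Z \<noteq> 0" "sqd R Z \<noteq> 0"
    using assms(5-7) by (simp_all add: sqd_eq_0_iff)
  then show ?thesis
    using S4_sqd_concyclic[OF assms(1-4)]
    unfolding inversion_chord_def by (simp add: field_simps)
qed

lemma divide_prod_remove:
  fixes h :: "'a \<Rightarrow> 'b::field"
  assumes "finite K" "i \<in> K" "h i \<noteq> 0"
  shows "x / h i * prod h K = x * prod h (K - {i})"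
  using prod.remove[OF assms(1,2), of h] assms(3) by simp

lemma divide_prod_remove2:
  fixes h :: "'a \<Rightarrow> 'b::field"
  assumes "finite K" "i \<in> K" "j \<in> K" "i \<noteq> j" "h i \<noteq> 0" "h j \<noteq> 0"
  shows "x / (h i * h j) * prod h K = x * prod h (K - {i, j})"
proof -
  have "x / (h i * h j) * prod h K = x / h j / h i * prod h K" by simp
  also have "\<dots> = x / h j * prod h (K - {i})"
    using assms by (intro divide_prod_remove)
  also have "\<dots> = x * prod h (K - {i} - {j})"
    using assms by (intro divide_prod_remove) auto
  finally show ?thesis by (simp add: insert_commute set_diff_eq)
qed

lemma inversion_chord_telescope:
  fixes p :: "nat \<Rightarrow> real \<times> real"
  assumes circle: "\<And>i. a \<le> i \<Longrightarrow> i \<le> a + N \<Longrightarrow> sqd c (p i) = s" "sqd c R = s" "sqd c Z = s"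
    and off_Z: "\<And>i. a \<le> i \<Longrightarrow> i \<le> a + N \<Longrightarrow> p i \<noteq> Z" "R \<noteq> Z"
  shows "inversion_chord Z (p a) R =
    (\<Sum>t<N. inversion_chord Z (p (a+t)) (p (a+t+1))) + inversion_chord Z (p (a+N)) R"
proof -
  define g where "g t = inversion_chord Z (p (a+t)) R" for t
  have chord_step: "g t - g (Suc t) = inversion_chord Z (p (a+t)) (p (a+t+1))" if "t < N" for t
    using inversion_chord_diff[of c "p (a+t)" s "p (a+t+1)" R Z] that circle off_Z
    by (simp add: g_def)
  have "g 0 = (\<Sum>t<N. g t - g (Suc t)) + g N"
    by (simp add: sum_lessThan_telescope')
  also have "\<dots> = (\<Sum>t<N. inversion_chord Z (p (a+t)) (p (a+t+1))) + g N"
    using chord_step by simp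
  finally show ?thesis
    by (simp add: g_def)
qed

lemma S4_sqd_telescope:
  fixes p :: "nat \<Rightarrow> real \<times> real"
  assumes circle: "\<And>i. a \<le> i \<Longrightarrow> i \<le> a + N \<Longrightarrow> sqd c (p i) = s" "sqd c R = s" "sqd c Z = s"
    and off_Z: "\<And>i. a \<le> i \<Longrightarrow> i \<le> a + N \<Longrightarrow> p i \<noteq> Z" "R \<noteq> Z"
  shows "S4 (p a) R Z * (\<Prod>k\<in>{a+1..a+N}. sqd (p k) Z) =
     (\<Sum>t<N. S4 (p (a+t)) (p (a+t+1)) Z * sqd R Z * (\<Prod>k\<in>{a..a+N} - {a+t, a+t+1}. sqd (p k) Z))
     + S4 (p (a+N)) R Z * (\<Prod>k\<in>{a..<a+N}. sqd (p k) Z)"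
proof -
  define h where "h k = sqd (p k) Z" for k
  define g where "g t = inversion_chord Z (p (a+t)) R" for t
  define D where "D = sqd R Z * prod h {a..a+N}"
  have h_nz: "h i \<noteq> 0" if "a \<le> i" "i \<le> a + N" for i
    using off_Z(1)[OF that] by (simp add: h_def sqd_eq_0_iff)
  have R_nz: "sqd R Z \<noteq> 0"
    using off_Z(2) by (simp add: sqd_eq_0_iff)
  have "g 0 * D = (\<Sum>t<N. inversion_chord Z (p (a+t)) (p (a+t+1)) * D) + g N * D"
    using inversion_chord_telescope[where a = a and N = N and p = p, OF circle off_Z]
    by (simp add: g_def distrib_right sum_distrib_right)
  moreover have "g 0 * D = S4 (p a) R Z * prod h {a+1..a+N}"
  proof -
    have "g 0 * D = S4 (p a) R Z / h a * prod h {a..a+N}"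
      using R_nz by (simp add: g_def D_def inversion_chord_def h_def)
    also have "\<dots> = S4 (p a) R Z * prod h ({a..a+N} - {a})"
      using h_nz[of a] by (intro divide_prod_remove) auto
    also have "{a..a+N} - {a} = {a+1..a+N}" by auto
    finally show ?thesis .
  qed
  moreover have "g N * D = S4 (p (a+N)) R Z * prod h {a..<a+N}"
  proof -
    have "g N * D = S4 (p (a+N)) R Z / h (a+N) * prod h {a..a+N}"
      using R_nz by (simp add: g_def D_def inversion_chord_def h_def)
    also have "\<dots> = S4 (p (a+N)) R Z * prod h ({a..a+N} - {a+N})"
      using h_nz[of "a+N"] by (intro divide_prod_remove) auto
    also have "{a..a+N} - {a+N} = {a..<a+N}" by auto
    finally show ?thesis .
  qed
  moreover have "inversion_chord Z (p (a+t)) (p (a+t+1)) * D =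
      S4 (p (a+t)) (p (a+t+1)) Z * sqd R Z * prod h ({a..a+N} - {a+t, a+t+1})" if "t < N" for t
  proof -
    have "inversion_chord Z (p (a+t)) (p (a+t+1)) * D =
        S4 (p (a+t)) (p (a+t+1)) Z * sqd R Z / (h (a+t) * h (a+t+1)) * prod h {a..a+N}"
      by (simp add: inversion_chord_def D_def h_def)
    also have "\<dots> = S4 (p (a+t)) (p (a+t+1)) Z * sqd R Z * prod h ({a..a+N} - {a+t, a+t+1})"
      using that h_nz[of "a+t"] h_nz[of "a+t+1"] by (intro divide_prod_remove2) auto
    finally show ?thesis .
  qed
  ultimately show ?thesis
    unfolding h_def by simp
qed

lemma prod_image_diff:
  assumes "inj_on f K" "J \<subseteq> K"
  shows "prod g (f ` K - f ` J) = prod (g \<circ> f) (K - J)"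
proof -
  have "f ` K - f ` J = f ` (K - J)"
    using assms by (simp add: inj_on_image_set_diff)
  moreover have "inj_on f (K - J)"
    using assms(1) by (rule inj_on_subset) blast
  ultimately show ?thesis by (simp add: prod.reindex)
qed

lemma idx_in_range: "0 < n \<Longrightarrow> idx n k \<in> {1..n}"
  unfolding idx_def by (simp add: Suc_le_eq)

lemma idx_eq_self: "k \<in> {1..n} \<Longrightarrow> idx n k = k"
  unfolding idx_def by (cases k) auto

lemma cyclic_ccw_concyclic:
  assumes "cyclic_ccw n A"
  obtains c s where "\<And>i. i \<in> {1..n} \<Longrightarrow> sqd c (A i) = s"
proof -
  obtain c \<rho> \<theta> where
    A: "\<And>i. i \<in> {1..n} \<Longrightarrow> A i = (fst c + \<rho> * cos (\<theta> i), snd c + \<rho> * sin (\<theta> i))"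
    using assms unfolding cyclic_ccw_def by blast
  have "sqd c (A i) = \<rho>\<^sup>2" if "i \<in> {1..n}" for i
    using A[OF that] by (simp add: sqd_def power_mult_distrib flip: distrib_left)
  then show ?thesis by (rule that)
qed

lemma cyclic_ccw_idx_eq_iff:
  assumes "cyclic_ccw n A" "0 < n"
  shows "A (idx n i) = A (idx n j) \<longleftrightarrow> idx n i = idx n j"
  using assms idx_in_range[OF assms(2)] unfolding cyclic_ccw_def inj_on_def by metis

lemma distinct_idx_window:
  assumes "distinct (map (idx n) ([q..<q + N + 1] @ [r, r + 1]))"
  shows "inj_on (idx n) {q..q + N}" "idx n (r + 1) \<notin> idx n ` {q..q + N}"
    "idx n r \<noteq> idx n (r + 1)"
proof -
  have "set [q..<q + N + 1] = {q..q + N}" by auto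
  with assms show "inj_on (idx n) {q..q + N}" "idx n (r + 1) \<notin> idx n ` {q..q + N}"
    "idx n r \<noteq> idx n (r + 1)"
    by (simp_all del: upt_Suc add: distinct_map)
qed

theorem corollary2p10:
  fixes n m q r :: nat and A :: "nat \<Rightarrow> real \<times> real"
  assumes "cyclic_ccw n A"
    and "2 \<le> m" and "m \<le> n - 1"
    and "q \<in> {1..n}" and "r \<in> {1..n}"
    and "distinct (map (idx n) ([q..<q + m - 1] @ [r, r + 1]))"
  shows "S4 (A q) (A r) (A (idx n (r + 1))) *
           (\<Prod>k\<in>{q + 1..q + m - 2}. sqd (A (idx n k)) (A (idx n (r + 1))))
       = (\<Sum>t\<in>{0..<m - 2}.
            S4 (A (idx n (q + t))) (A (idx n (q + t + 1))) (A (idx n (r + 1)))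
            * sqd (A r) (A (idx n (r + 1)))
            * (\<Prod>k\<in>idx n ` {q..q + m - 2} - {idx n (q + t), idx n (q + t + 1)}.
                 sqd (A k) (A (idx n (r + 1)))))
         + S4 (A (idx n (q + m - 2))) (A r) (A (idx n (r + 1))) *
           (\<Prod>k\<in>{q..q + m - 3}. sqd (A (idx n k)) (A (idx n (r + 1))))"
proof -
  obtain N where m: "m = N + 2"
    using assms(2) by (metis add.commute le_Suc_ex)
  have n: "0 < n" and q: "idx n q = q" and r: "idx n r = r"
    using assms(4,5) by (auto simp: idx_eq_self)
  obtain c s where circle: "\<And>i. sqd c (A (idx n i)) = s"
    using cyclic_ccw_concyclic[OF assms(1)] idx_in_range[OF n] by metis
  have "distinct (map (idx n) ([q..<q + N + 1] @ [r, r + 1]))"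
    using assms(6) by (simp add: m add.assoc)
  note inj = distinct_idx_window(1)[OF this] and off_Z = distinct_idx_window(2,3)[OF this]
  define Z where "Z = A (idx n (r + 1))"
  have window_off_Z: "A (idx n i) \<noteq> Z" if "i \<in> {q..q + N}" for i
    using off_Z(1) that unfolding Z_def cyclic_ccw_idx_eq_iff[OF assms(1) n] by (metis imageI)
  have r_off_Z: "A (idx n r) \<noteq> Z"
    using off_Z(2) unfolding Z_def cyclic_ccw_idx_eq_iff[OF assms(1) n] .
  have "S4 (A (idx n q)) (A (idx n r)) Z * (\<Prod>k\<in>{q+1..q+N}. sqd (A (idx n k)) Z) =
     (\<Sum>t<N. S4 (A (idx n (q+t))) (A (idx n (q+t+1))) Z * sqd (A (idx n r)) Z
        * (\<Prod>k\<in>{q..q+N} - {q+t, q+t+1}. sqd (A (idx n k)) Z))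
     + S4 (A (idx n (q+N))) (A (idx n r)) Z * (\<Prod>k\<in>{q..<q+N}. sqd (A (idx n k)) Z)"
    using circle window_off_Z r_off_Z
    by (intro S4_sqd_telescope[where c = c and s = s]) (auto simp: Z_def)
  moreover have "(\<Prod>k\<in>idx n ` {q..q+N} - {idx n (q+t), idx n (q+t+1)}. sqd (A k) Z)
      = (\<Prod>k\<in>{q..q+N} - {q+t, q+t+1}. sqd (A (idx n k)) Z)" if "t < N" for t
    using prod_image_diff[OF inj, of "{q+t, q+t+1}"] that by (simp add: comp_def)
  moreover have "{q..q + (N + 2) - 3} = {q..<q + N}"
    using assms(4) by auto
  ultimately show ?thesis
    unfolding m Z_def[symmetric] q r by (simp add: atLeast0LessThan)
qed

end
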